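(* Let $L\ge 1$ and consider the following Markov process on $\{0,1\}^L$, with coordinates indexed by $\{0,1,\dots,L-1\}$ and started from an arbitrary state $\Gamma^0$. Given the state $\Gamma^i$, the state $\Gamma^{i+1}$ is obtained by choosing a permutation $\sigma$ of $\{0,\dots,L-1\}$ uniformly at random (independently of the past), setting $\Delta_0=\Gamma^i$, and for $1\le j\le L$ letting $\Delta_j$ be obtained from $\Delta_{j-1}$ by setting $\Delta_j(\sigma(j-1))=\Delta_{j-1}((\sigma(j-1)+1)\bmod L)$ and $\Delta_j(t)=\Delta_{j-1}(t)$ for all $t\ne\sigma(j-1)$; finally $\Gamma^{i+1}=\Delta_L$. Let $T$ be the first time at which the process is in the all-$0$ or the all-$1$ state. Then for every integer $a\ge1$, $\Pr[T\ge 4aL^2]\le L\,2^{-a}$. *)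

theory Defs
  imports "HOL-Probability.Probability" "HOL-Combinatorics.Permutations"
begin

text \<open>States of the process are bool lists of length L (coordinates 0..L-1).\<close>

definition sweep :: "nat \<Rightarrow> (nat \<Rightarrow> nat) \<Rightarrow> bool list \<Rightarrow> bool list" where
  "sweep L \<sigma> \<Gamma> =
     foldl (\<lambda>\<Delta> j. \<Delta>[\<sigma> j := \<Delta> ! ((\<sigma> j + 1) mod L)]) \<Gamma> [0..<L]"

definition step_pmf :: "nat \<Rightarrow> bool list \<Rightarrow> bool list pmf" where
  "step_pmf L \<Gamma> = map_pmf (\<lambda>\<sigma>. sweep L \<sigma> \<Gamma>) (pmf_of_set {\<sigma>. \<sigma> permutes {0..<L}})"

text \<open>Distribution of the trajectory [Gamma^0, ..., Gamma^n] started from Gamma^0.\<close>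
fun traj :: "nat \<Rightarrow> nat \<Rightarrow> bool list \<Rightarrow> bool list list pmf" where
  "traj L 0 \<Gamma> = return_pmf [\<Gamma>]"
| "traj L (Suc n) \<Gamma> = bind_pmf (step_pmf L \<Gamma>) (\<lambda>\<Gamma>'. map_pmf (Cons \<Gamma>) (traj L n \<Gamma>'))"

definition absorbed :: "bool list \<Rightarrow> bool" where
  "absorbed \<Gamma> \<longleftrightarrow> (\<forall>x\<in>set \<Gamma>. \<not> x) \<or> (\<forall>x\<in>set \<Gamma>. x)"

end

theory Submission
  imports Defs
begin

text \<open>
  Let \<open>\<tau> = inv \<sigma>\<close>, so that coordinate \<open>p\<close> is overwritten at step \<open>\<tau> p\<close> by a copy of its
  right neighbour. Chasing the copies, after the sweep \<open>p\<close> holds the initial value of coordinate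
  \<open>p + m\<close>, where \<open>m \<ge> 1\<close> is the first offset with \<open>\<tau> (p + m - 1) < \<tau> (p + m)\<close>: a sweep pulls
  the state back along the random map \<open>source L \<tau>\<close>. So the state at time \<open>n\<close> is the initial
  state pulled back along a composite of \<open>n\<close> independent such maps, and the chain is absorbed
  once this composite identifies every pair of neighbours \<open>t, t + 1\<close>.

  Follow two positions \<open>x \<noteq> y\<close> under the independent maps. The potential \<open>d (L - d)\<close> of their
  cyclic distance \<open>d\<close> drops by at least \<open>1/4\<close> in expectation per step while they are apart: the
  change of \<open>d\<close> is the difference of the two ascent offsets, which has mean zero by rotation
  invariance of the uniform permutation and is nonzero with probability at least \<open>1/4\<close>. Since the
  potential is at most \<open>L\<^sup>2/4\<close>, the pair is still apart after \<open>2 L\<^sup>2\<close> steps with probability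
  at most \<open>1/2\<close>, hence after \<open>2 a L\<^sup>2\<close> steps with probability at most \<open>2\<^sup>-\<^sup>a\<close>; a union
  bound over the \<open>L - 1\<close> neighbouring pairs finishes the proof.
\<close>

section \<open>Ascents of the update order\<close>

definition ascent :: "nat \<Rightarrow> (nat \<Rightarrow> nat) \<Rightarrow> nat \<Rightarrow> nat \<Rightarrow> bool" where
  "ascent L \<tau> p k \<longleftrightarrow> 1 \<le> k \<and> \<tau> ((p + k - 1) mod L) < \<tau> ((p + k) mod L)"

definition ascent_offset :: "nat \<Rightarrow> (nat \<Rightarrow> nat) \<Rightarrow> nat \<Rightarrow> nat" where
  "ascent_offset L \<tau> p = (LEAST k. ascent L \<tau> p k)"

definition source :: "nat \<Rightarrow> (nat \<Rightarrow> nat) \<Rightarrow> nat \<Rightarrow> nat" where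
  "source L \<tau> p = (p + ascent_offset L \<tau> p) mod L"

lemma Suc_mod_neq: "2 \<le> L \<Longrightarrow> Suc n mod L \<noteq> n mod L"
  using mod_eq_dvd_iff_nat[of n "Suc n" L] by auto

lemma Suc_mod_eq_iff: "x < L \<Longrightarrow> y < L \<Longrightarrow> Suc x mod L = Suc y mod L \<longleftrightarrow> x = y"
  by (auto simp: mod_Suc split: if_splits)

lemma ascent_exists:
  assumes perm: "\<tau> permutes {0..<L}" and L: "2 \<le> L"
  shows "\<exists>k. ascent L \<tau> p k"
proof -
  define h where "h k = \<tau> ((p + k) mod L)" for k
  have "Max (h ` {1..L}) \<in> h ` {1..L}"
    using L by (intro Max_in) auto
  then obtain k where k: "k \<in> {1..L}" "h k = Max (h ` {1..L})"
    by (metis imageE)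
  have max: "h j \<le> h k" if "j \<in> {1..L}" for j
    using k(2) that by simp
  have "h (k - 1) \<le> h k"
  proof (cases "k = 1")
    case True
    then show ?thesis using max[of L] L by (simp add: h_def)
  next
    case False
    then have "k - 1 \<in> {1..L}"
      using k(1) by auto
    then show ?thesis using max by simp
  qed
  moreover have "h (k - 1) \<noteq> h k"
  proof -
    have "(p + (k - 1)) mod L \<noteq> (p + k) mod L"
      using Suc_mod_neq[OF L, of "p + (k - 1)"] k(1) by simp
    then show ?thesis
      unfolding h_def using permutes_inj[OF perm] by (auto dest: injD)
  qed
  ultimately show ?thesis
    using k(1) by (auto simp: ascent_def h_def)
qed

lemma
  assumes "\<tau> permutes {0..<L}" "2 \<le> L"
  shows ascent_ascent_offset: "ascent L \<tau> p (ascent_offset L \<tau> p)"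
    and ascent_offset_ge_1: "1 \<le> ascent_offset L \<tau> p"
proof -
  obtain k where k: "ascent L \<tau> p k"
    using ascent_exists[OF assms] ..
  show "ascent L \<tau> p (ascent_offset L \<tau> p)"
    unfolding ascent_offset_def using k by (rule LeastI)
  then show "1 \<le> ascent_offset L \<tau> p"
    by (simp add: ascent_def)
qed

lemma ascent_shift:
  assumes "(x + d) mod L = y mod L" and "1 \<le> k"
  shows "ascent L \<tau> x (d + k) \<longleftrightarrow> ascent L \<tau> y k"
proof -
  have "(x + (d + j)) mod L = (y + j) mod L" for j
    using mod_add_left_eq[of "x + d" L j] mod_add_left_eq[of y L j] assms(1)
    by (simp add: add.assoc)
  from this[of "k - 1"] this[of k] assms(2) show ?thesis
    by (simp add: ascent_def)
qed

lemma ascent_Suc_iff: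
  "ascent L \<tau> x (Suc k) \<longleftrightarrow>
     (k = 0 \<and> \<tau> (x mod L) < \<tau> ((x + 1) mod L)) \<or> ascent L \<tau> ((x + 1) mod L) k"
proof (cases k)
  case 0
  then show ?thesis by (simp add: ascent_def)
next
  case (Suc k')
  then show ?thesis
    using ascent_shift[of x 1 L "(x + 1) mod L" k \<tau>] by simp
qed

lemma ascent_offset_shift:
  assumes "\<tau> permutes {0..<L}" "2 \<le> L" and "(x + d) mod L = y mod L"
  shows "ascent_offset L \<tau> x \<le> d + ascent_offset L \<tau> y"
  unfolding ascent_offset_def
  using ascent_shift[OF assms(3) ascent_offset_ge_1[OF assms(1,2)]]
    ascent_ascent_offset[OF assms(1,2), of y]
  by (intro Least_le) (simp add: ascent_offset_def)

lemma ascent_offset_Suc: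
  assumes "\<tau> permutes {0..<L}" "2 \<le> L" and "x < L" "\<tau> ((x + 1) mod L) < \<tau> x"
  shows "ascent_offset L \<tau> x = Suc (ascent_offset L \<tau> ((x + 1) mod L))"
proof -
  have "(\<lambda>k. ascent L \<tau> x (Suc k)) = ascent L \<tau> ((x + 1) mod L)"
    using assms(3,4) by (auto simp: fun_eq_iff ascent_Suc_iff)
  moreover have "\<not> ascent L \<tau> x 0"
    by (simp add: ascent_def)
  ultimately show ?thesis
    unfolding ascent_offset_def using ascent_ascent_offset[OF assms(1,2), of x]
    by (simp add: Least_Suc ascent_offset_def)
qed

lemma ascent_offset_eq_1: "ascent L \<tau> x 1 \<Longrightarrow> ascent_offset L \<tau> x = 1"
  unfolding ascent_offset_def by (rule Least_equality) (auto simp: ascent_def)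

section \<open>A sweep is a pullback\<close>

definition partial_sweep :: "nat \<Rightarrow> (nat \<Rightarrow> nat) \<Rightarrow> nat \<Rightarrow> bool list \<Rightarrow> bool list" where
  "partial_sweep L \<sigma> j \<Gamma> =
     foldl (\<lambda>\<Delta> j. \<Delta>[\<sigma> j := \<Delta> ! ((\<sigma> j + 1) mod L)]) \<Gamma> [0..<j]"

text \<open>After the first \<open>j\<close> updates coordinate \<open>p\<close> holds the initial value of coordinate
  \<open>p + copy_offset L \<tau> j p\<close>: its own if it has not been updated yet, and otherwise the one
  reached by chasing copies up to the first ascent.\<close>

definition copy_offset :: "nat \<Rightarrow> (nat \<Rightarrow> nat) \<Rightarrow> nat \<Rightarrow> nat \<Rightarrow> nat" where
  "copy_offset L \<tau> j p = (LEAST k. (k = 0 \<and> j \<le> \<tau> p) \<or> ascent L \<tau> p k)"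

lemma partial_sweep_Suc:
  "partial_sweep L \<sigma> (Suc j) \<Gamma> =
     (partial_sweep L \<sigma> j \<Gamma>)[\<sigma> j := partial_sweep L \<sigma> j \<Gamma> ! ((\<sigma> j + 1) mod L)]"
  by (simp add: partial_sweep_def)

lemma length_partial_sweep: "length (partial_sweep L \<sigma> j \<Gamma>) = length \<Gamma>"
  by (induction j) (simp_all add: partial_sweep_def)

lemma copy_offset_0: "copy_offset L \<tau> 0 p = 0"
  unfolding copy_offset_def by (rule Least_equality) auto

lemma copy_offset_Suc_other: "\<tau> p \<noteq> j \<Longrightarrow> copy_offset L \<tau> (Suc j) p = copy_offset L \<tau> j p"
proof -
  assume "\<tau> p \<noteq> j"
  then have "Suc j \<le> \<tau> p \<longleftrightarrow> j \<le> \<tau> p"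
    by auto
  then show ?thesis
    by (simp add: copy_offset_def)
qed

lemma copy_offset_Suc_updated:
  assumes perm: "\<tau> permutes {0..<L}" and L: "2 \<le> L" and q: "q < L" "\<tau> q = j"
  shows "copy_offset L \<tau> (Suc j) q = Suc (copy_offset L \<tau> j ((q + 1) mod L))"
proof -
  define q' where "q' = (q + 1) mod L"
  let ?P = "\<lambda>k. (k = 0 \<and> Suc j \<le> \<tau> q) \<or> ascent L \<tau> q k"
  have "q' \<noteq> q"
    using Suc_mod_neq[OF L, of q] q(1) by (simp add: q'_def)
  then have "\<tau> q' \<noteq> j"
    using q(2) permutes_inj[OF perm] by (metis injD)
  then have "\<tau> q < \<tau> q' \<longleftrightarrow> j \<le> \<tau> q'"
    using q(2) by auto
  then have "?P (Suc k) \<longleftrightarrow> (k = 0 \<and> j \<le> \<tau> q') \<or> ascent L \<tau> q' k" for k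
    using q(1) by (simp add: ascent_Suc_iff q'_def)
  then have shift: "(\<lambda>k. ?P (Suc k)) = (\<lambda>k. (k = 0 \<and> j \<le> \<tau> q') \<or> ascent L \<tau> q' k)"
    by simp
  have "copy_offset L \<tau> (Suc j) q = (LEAST k. ?P k)"
    by (simp add: copy_offset_def)
  also have "\<dots> = Suc (LEAST k. ?P (Suc k))"
    using ascent_ascent_offset[OF perm L, of q] q(2) by (intro Least_Suc) (auto simp: ascent_def)
  also have "\<dots> = Suc (copy_offset L \<tau> j q')"
    unfolding shift copy_offset_def ..
  finally show ?thesis
    unfolding q'_def .
qed

lemma nth_partial_sweep:
  assumes perm: "\<sigma> permutes {0..<L}" and L: "2 \<le> L" and len: "length \<Gamma> = L"
    and "j \<le> L" "p < L"
  shows "partial_sweep L \<sigma> j \<Gamma> ! p = \<Gamma> ! ((p + copy_offset L (inv \<sigma>) j p) mod L)"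
  using assms(4,5)
proof (induction j arbitrary: p)
  case 0
  then show ?case by (simp add: partial_sweep_def copy_offset_0)
next
  case (Suc j)
  let ?\<tau> = "inv \<sigma>" and ?q = "\<sigma> j"
  have \<tau>: "?\<tau> permutes {0..<L}"
    using perm by (rule permutes_inv)
  have q: "?q < L" "?\<tau> ?q = j"
    using permutes_in_image[OF perm, of j] permutes_inverses(2)[OF perm] Suc.prems by auto
  show ?case
  proof (cases "p = ?q")
    case True
    have "partial_sweep L \<sigma> (Suc j) \<Gamma> ! p = partial_sweep L \<sigma> j \<Gamma> ! ((?q + 1) mod L)"
      using True q(1) len by (simp add: partial_sweep_Suc length_partial_sweep)
    also have "\<dots> = \<Gamma> ! (((?q + 1) mod L + copy_offset L ?\<tau> j ((?q + 1) mod L)) mod L)"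
      using Suc L by simp
    also have "\<dots> = \<Gamma> ! ((p + copy_offset L ?\<tau> (Suc j) p) mod L)"
      using True copy_offset_Suc_updated[OF \<tau> L q] by (simp add: mod_add_left_eq)
    finally show ?thesis .
  next
    case False
    then have "?\<tau> p \<noteq> j"
      using q(2) by (metis perm permutes_inverses(1))
    then show ?thesis
      using False Suc by (simp add: partial_sweep_Suc copy_offset_Suc_other)
  qed
qed

lemma sweep_eq_partial_sweep: "sweep L \<sigma> \<Gamma> = partial_sweep L \<sigma> L \<Gamma>"
  by (simp add: sweep_def partial_sweep_def)

definition pullback :: "nat \<Rightarrow> (nat \<Rightarrow> nat) \<Rightarrow> bool list \<Rightarrow> bool list" where
  "pullback L g \<Gamma> = map (\<lambda>t. \<Gamma> ! g t) [0..<L]"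

lemma sweep_eq_pullback:
  assumes perm: "\<sigma> permutes {0..<L}" and L: "2 \<le> L" and len: "length \<Gamma> = L"
  shows "sweep L \<sigma> \<Gamma> = pullback L (source L (inv \<sigma>)) \<Gamma>"
proof (rule nth_equalityI)
  show "length (sweep L \<sigma> \<Gamma>) = length (pullback L (source L (inv \<sigma>)) \<Gamma>)"
    using len by (simp add: sweep_eq_partial_sweep length_partial_sweep pullback_def)
next
  fix p assume "p < length (sweep L \<sigma> \<Gamma>)"
  then have p: "p < L"
    using len by (simp add: sweep_eq_partial_sweep length_partial_sweep)
  have "inv \<sigma> p < L"
    using permutes_in_image[OF permutes_inv[OF perm]] p by simp
  then have "copy_offset L (inv \<sigma>) L p = ascent_offset L (inv \<sigma>) p"
    by (simp add: copy_offset_def ascent_offset_def ascent_def)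
  then show "sweep L \<sigma> \<Gamma> ! p = pullback L (source L (inv \<sigma>)) \<Gamma> ! p"
    using nth_partial_sweep[OF perm L len order_refl p] p
    by (simp add: sweep_eq_partial_sweep pullback_def source_def)
qed

lemma length_pullback [simp]: "length (pullback L g \<Gamma>) = L"
  by (simp add: pullback_def)

lemma pullback_id: "length \<Gamma> = L \<Longrightarrow> pullback L id \<Gamma> = \<Gamma>"
  using map_nth[of \<Gamma>] by (simp add: pullback_def)

lemma pullback_pullback:
  "(\<And>t. t < L \<Longrightarrow> g t < L) \<Longrightarrow> pullback L g (pullback L f \<Gamma>) = pullback L (f \<circ> g) \<Gamma>"
  by (simp add: pullback_def)

section \<open>The chain as a random composition of sources\<close>

abbreviation perms :: "nat \<Rightarrow> (nat \<Rightarrow> nat) set" where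
  "perms L \<equiv> {\<tau>. \<tau> permutes {0..<L}}"

lemma finite_perms: "finite (perms L)"
  by (rule finite_permutations) simp

lemma perms_nonempty: "perms L \<noteq> {}"
  using permutes_id by blast

lemma set_pmf_of_set_perms: "set_pmf (pmf_of_set (perms L)) = perms L"
  by (rule set_pmf_of_set[OF perms_nonempty finite_perms])

definition source_pmf :: "nat \<Rightarrow> (nat \<Rightarrow> nat) pmf" where
  "source_pmf L = map_pmf (source L) (pmf_of_set (perms L))"

lemma set_pmf_source_pmf: "set_pmf (source_pmf L) = source L ` perms L"
  by (simp add: source_pmf_def set_pmf_of_set_perms)

lemma finite_set_pmf_source_pmf: "finite (set_pmf (source_pmf L))"
  by (simp add: set_pmf_source_pmf finite_perms)

lemma source_less: "1 \<le> L \<Longrightarrow> source L \<tau> p < L"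
  by (simp add: source_def)

lemma step_pmf_eq_source_pmf:
  assumes L: "2 \<le> L" and len: "length \<Gamma> = L"
  shows "step_pmf L \<Gamma> = map_pmf (\<lambda>f. pullback L f \<Gamma>) (source_pmf L)"
proof -
  have "step_pmf L \<Gamma> = map_pmf (\<lambda>\<sigma>. pullback L (source L (inv \<sigma>)) \<Gamma>) (pmf_of_set (perms L))"
    unfolding step_pmf_def
    by (intro map_pmf_cong refl) (simp add: set_pmf_of_set_perms sweep_eq_pullback[OF _ L len])
  also have "\<dots> = map_pmf (\<lambda>\<tau>. pullback L (source L \<tau>) \<Gamma>) (map_pmf inv (pmf_of_set (perms L)))"
    by (simp add: pmf.map_comp comp_def)
  also have "map_pmf inv (pmf_of_set (perms L)) = pmf_of_set (perms L)"
  proof -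
    have "inj_on inv (perms L)"
      by (rule inj_onI) (metis mem_Collect_eq permutes_inv_inv)
    moreover have "inv ` perms L = perms L"
      by (auto simp: permutes_inv image_iff) (metis permutes_inv permutes_inv_inv)
    ultimately show ?thesis
      using map_pmf_of_set_inj[of inv "perms L"] perms_nonempty finite_perms by simp
  qed
  finally show ?thesis
    by (simp add: source_pmf_def pmf.map_comp comp_def)
qed

text \<open>The law of \<open>f\<^sub>1 \<circ> \<dots> \<circ> f\<^sub>n\<close> for independent \<open>f\<^sub>i\<close> with law \<open>source_pmf L\<close>. The
  recursion adds the innermost factor, which moves a pair of positions one step forward;
  \<open>source_iter_Suc_left\<close> adds the outermost one, which is how the chain sees it.\<close>

primrec source_iter :: "nat \<Rightarrow> nat \<Rightarrow> (nat \<Rightarrow> nat) pmf" where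
  "source_iter L 0 = return_pmf id"
| "source_iter L (Suc n) = bind_pmf (source_pmf L) (\<lambda>f. map_pmf (\<lambda>g. g \<circ> f) (source_iter L n))"

lemma finite_set_pmf_source_iter: "finite (set_pmf (source_iter L n))"
  by (induction n) (auto simp: finite_set_pmf_source_pmf)

lemma source_iter_less:
  "1 \<le> L \<Longrightarrow> g \<in> set_pmf (source_iter L n) \<Longrightarrow> x < L \<Longrightarrow> g x < L"
  by (induction n arbitrary: g x) (auto simp: set_pmf_source_pmf source_less)

lemma source_iter_add:
  "source_iter L (m + n) = bind_pmf (source_iter L m) (\<lambda>g. map_pmf (\<lambda>h. h \<circ> g) (source_iter L n))"
proof (induction m)
  case 0
  then show ?case by (simp add: bind_return_pmf)
next
  case (Suc m)
  then show ?case
    by (simp add: map_bind_pmf bind_assoc_pmf bind_map_pmf pmf.map_comp comp_def o_assoc)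
qed

lemma source_iter_Suc_left:
  "source_iter L (Suc n) = bind_pmf (source_pmf L) (\<lambda>f. map_pmf (\<lambda>g. f \<circ> g) (source_iter L n))"
proof -
  have "source_iter L 1 = source_pmf L"
    by (simp add: bind_return_pmf' map_pmf_def[symmetric])
  then have "source_iter L (n + 1) = bind_pmf (source_iter L n) (\<lambda>g. map_pmf (\<lambda>f. f \<circ> g) (source_pmf L))"
    by (simp only: source_iter_add)
  also have "\<dots> = bind_pmf (source_pmf L) (\<lambda>f. map_pmf (\<lambda>g. f \<circ> g) (source_iter L n))"
    unfolding map_pmf_def by (rule bind_commute_pmf)
  finally show ?thesis by simp
qed

lemma map_pmf_nth_traj:
  assumes L: "2 \<le> L"
  shows "k \<le> n \<Longrightarrow> length \<Gamma> = L \<Longrightarrow>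
    map_pmf (\<lambda>xs. xs ! k) (traj L n \<Gamma>) = map_pmf (\<lambda>g. pullback L g \<Gamma>) (source_iter L k)"
proof (induction n arbitrary: k \<Gamma>)
  case 0
  then show ?case by (simp add: pullback_id)
next
  case (Suc n)
  show ?case
  proof (cases k)
    case 0
    then show ?thesis
      using Suc.prems by (simp add: map_bind_pmf pmf.map_comp comp_def bind_pmf_const pullback_id)
  next
    case (Suc k')
    have "map_pmf (\<lambda>xs. xs ! k) (traj L (Suc n) \<Gamma>)
        = bind_pmf (source_pmf L) (\<lambda>f. map_pmf (\<lambda>g. pullback L g (pullback L f \<Gamma>)) (source_iter L k'))"
      using Suc Suc.prems Suc.IH
      by (simp add: map_bind_pmf pmf.map_comp comp_def step_pmf_eq_source_pmf[OF L] bind_map_pmf)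
    also have "\<dots> = map_pmf (\<lambda>g. pullback L g \<Gamma>) (source_iter L k)"
      unfolding Suc source_iter_Suc_left map_bind_pmf pmf.map_comp
      using L by (intro bind_pmf_cong refl map_pmf_cong) (auto simp: pullback_pullback source_iter_less)
    finally show ?thesis .
  qed
qed

section \<open>Statistics of the ascent offset\<close>

definition cdist :: "nat \<Rightarrow> nat \<Rightarrow> nat \<Rightarrow> int" where
  "cdist L u v = (int v - int u) mod int L"

lemma cdist_nonneg: "1 \<le> L \<Longrightarrow> 0 \<le> cdist L u v"
  by (simp add: cdist_def)

lemma cdist_less: "1 \<le> L \<Longrightarrow> cdist L u v < int L"
  by (simp add: cdist_def)

lemma cdist_self [simp]: "cdist L u u = 0"
  by (simp add: cdist_def)

lemma add_cdist_mod: "1 \<le> L \<Longrightarrow> (u + nat (cdist L u v)) mod L = v mod L"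
proof -
  assume L: "1 \<le> L"
  have "int ((u + nat (cdist L u v)) mod L) = (int u + cdist L u v) mod int L"
    using cdist_nonneg[OF L] by (simp add: zmod_int)
  also have "\<dots> = int (v mod L)"
    by (simp add: cdist_def mod_add_right_eq zmod_int)
  finally show ?thesis by simp
qed

lemma add_complement_cdist_mod: "1 \<le> L \<Longrightarrow> (v + (L - nat (cdist L u v))) mod L = u mod L"
proof -
  assume L: "1 \<le> L"
  have "int (L - nat (cdist L u v)) = int L - cdist L u v"
    using cdist_nonneg[OF L] cdist_less[OF L, of u v] by simp
  then have "int ((v + (L - nat (cdist L u v))) mod L) = (int v + int L - cdist L u v) mod int L"
    by (simp add: zmod_int)
  also have "\<dots> = int (u mod L)"
    by (simp add: cdist_def mod_simps zmod_int)
  finally show ?thesis by simp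
qed

definition cyclic_shift :: "nat \<Rightarrow> nat \<Rightarrow> nat \<Rightarrow> nat" where
  "cyclic_shift L s p = (if p < L then (p + s) mod L else p)"

lemma cyclic_shift_inverse:
  assumes "s \<le> L" shows "cyclic_shift L (L - s) (cyclic_shift L s p) = p"
proof (cases "p < L")
  case True
  have "((p + s) mod L + (L - s)) mod L = (p + s + (L - s)) mod L"
    by (rule mod_add_left_eq)
  also have "p + s + (L - s) = p + L"
    using assms by simp
  finally show ?thesis
    using True by (simp add: cyclic_shift_def)
qed (simp add: cyclic_shift_def)

lemma cyclic_shift_permutes:
  assumes "s \<le> L" shows "cyclic_shift L s permutes {0..<L}"
proof (rule bij_imp_permutes)
  have "cyclic_shift L s (cyclic_shift L (L - s) p) = p" for p
    using cyclic_shift_inverse[of "L - s" L p] assms by simp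
  moreover have "cyclic_shift L r p < L" if "p < L" for r p
    using that by (simp add: cyclic_shift_def)
  ultimately show "bij_betw (cyclic_shift L s) {0..<L} {0..<L}"
    using cyclic_shift_inverse[OF assms]
    by (intro bij_betw_byWitness[where f' = "cyclic_shift L (L - s)"]) auto
qed (simp add: cyclic_shift_def)

lemma ascent_offset_cyclic_shift:
  "1 \<le> L \<Longrightarrow> ascent_offset L (\<tau> \<circ> cyclic_shift L s) x = ascent_offset L \<tau> ((x + s) mod L)"
proof -
  assume L: "1 \<le> L"
  have shift: "((x + j) mod L + s) mod L = ((x + s) mod L + j) mod L" for j
    by (simp add: mod_simps ac_simps)
  have "ascent L (\<tau> \<circ> cyclic_shift L s) x k = ascent L \<tau> ((x + s) mod L) k" for k
    using L shift[of "k - 1"] shift[of k] by (cases k) (simp_all add: ascent_def cyclic_shift_def)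
  then show ?thesis
    by (simp add: ascent_offset_def)
qed

lemma sum_ascent_offset_eq:
  assumes L: "1 \<le> L" and "y < L"
  shows "(\<Sum>\<tau>\<in>perms L. real (ascent_offset L \<tau> x)) = (\<Sum>\<tau>\<in>perms L. real (ascent_offset L \<tau> y))"
proof -
  define s where "s = nat (cdist L x y)"
  have "s \<le> L"
    using cdist_less[OF L, of x y] unfolding s_def by (simp add: nat_le_iff)
  then have "(\<Sum>\<tau>\<in>perms L. real (ascent_offset L \<tau> x))
      = (\<Sum>\<tau>\<in>perms L. real (ascent_offset L (\<tau> \<circ> cyclic_shift L s) x))"
    by (rule sum_permutations_compose_right[OF cyclic_shift_permutes])
  also have "\<dots> = (\<Sum>\<tau>\<in>perms L. real (ascent_offset L \<tau> y))"
    using add_cdist_mod[OF L, of x y] assms(2)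
    by (simp add: ascent_offset_cyclic_shift[OF L] s_def)
  finally show ?thesis .
qed

lemma card_permutes_less_half:
  fixes S :: "'a::linorder set"
  assumes "finite S" "a \<in> S" "b \<in> S" "a \<noteq> b"
    and C: "\<And>\<tau>. C (\<tau> \<circ> Transposition.transpose a b) = C \<tau>"
  shows "2 * card {\<tau>. \<tau> permutes S \<and> \<tau> a < \<tau> b \<and> C \<tau>} = card {\<tau>. \<tau> permutes S \<and> C \<tau>}"
proof -
  define t where "t = Transposition.transpose a b"
  define A where "A = {\<tau>. \<tau> permutes S \<and> \<tau> a < \<tau> b \<and> C \<tau>}"
  define B where "B = {\<tau>. \<tau> permutes S \<and> \<tau> b < \<tau> a \<and> C \<tau>}"
  have "t permutes S"
    unfolding t_def using assms(2,3) by (rule permutes_swap_id)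
  then have "bij_betw (\<lambda>\<tau>. \<tau> \<circ> t) A B"
    unfolding A_def B_def t_def
    by (intro bij_betw_byWitness[where f' = "\<lambda>\<tau>. \<tau> \<circ> t"])
       (auto simp: fun_eq_iff C t_def intro: permutes_compose)
  then have "card A = card B"
    by (rule bij_betw_same_card)
  moreover have "\<tau> a \<noteq> \<tau> b" if "\<tau> permutes S" for \<tau>
    using assms(4) permutes_inj[OF that] by (metis injD)
  then have "{\<tau>. \<tau> permutes S \<and> C \<tau>} = A \<union> B"
    unfolding A_def B_def by (auto simp: neq_iff)
  moreover have "A \<inter> B = {}"
    unfolding A_def B_def by auto
  moreover have "finite A" "finite B"
    unfolding A_def B_def using finite_permutations[OF assms(1)] by auto
  ultimately show ?thesis
    unfolding A_def by (simp add: card_Un_disjoint)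
qed

lemma card_offsets_differ_adjacent:
  assumes L: "2 \<le> L" and x: "x < L"
  shows "card (perms L) \<le> 2 * card {\<tau> \<in> perms L. ascent_offset L \<tau> x \<noteq> ascent_offset L \<tau> ((x + 1) mod L)}"
    (is "_ \<le> 2 * card ?D")
proof -
  let ?y = "(x + 1) mod L"
  have y: "?y < L" "?y \<noteq> x"
    using L x Suc_mod_neq[OF L, of x] by auto
  have "card (perms L) = 2 * card {\<tau>. \<tau> permutes {0..<L} \<and> \<tau> ?y < \<tau> x \<and> True}"
    using card_permutes_less_half[of "{0..<L}" ?y x "\<lambda>_. True"] x y by simp
  also have "\<dots> \<le> 2 * card ?D"
    using ascent_offset_Suc[OF _ L x] finite_perms
    by (intro mult_le_mono2 card_mono) auto
  finally show ?thesis .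
qed

lemma card_offsets_differ_apart:
  assumes L: "2 \<le> L" and xy: "x < L" "y < L" "x \<noteq> y"
    and apart: "y \<noteq> (x + 1) mod L" "x \<noteq> (y + 1) mod L"
  shows "card (perms L) \<le> 4 * card {\<tau> \<in> perms L. ascent_offset L \<tau> x \<noteq> ascent_offset L \<tau> y}"
    (is "_ \<le> 4 * card ?D")
proof -
  define x' y' where "x' = (x + 1) mod L" and "y' = (y + 1) mod L"
  have "x' < L" "y' < L" "x' \<noteq> x" "y' \<noteq> y" "x' \<noteq> y'"
    using L xy Suc_mod_neq[OF L, of x] Suc_mod_neq[OF L, of y] Suc_mod_eq_iff[OF xy(1,2)]
    by (auto simp: x'_def y'_def)
  then have "2 * card {\<tau>. \<tau> permutes {0..<L} \<and> \<tau> x < \<tau> x' \<and> \<tau> y' < \<tau> y}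
      = card {\<tau>. \<tau> permutes {0..<L} \<and> \<tau> y' < \<tau> y}"
    using xy apart
    by (intro card_permutes_less_half) (auto simp: transpose_apply_other x'_def y'_def)
  moreover have "2 * card {\<tau>. \<tau> permutes {0..<L} \<and> \<tau> y' < \<tau> y} = card (perms L)"
    using card_permutes_less_half[of "{0..<L}" y' y "\<lambda>_. True"] \<open>y' < L\<close> \<open>y' \<noteq> y\<close> xy
    by simp
  ultimately have "card (perms L) = 4 * card {\<tau>. \<tau> permutes {0..<L} \<and> \<tau> x < \<tau> x' \<and> \<tau> y' < \<tau> y}"
    by simp
  also have "\<dots> \<le> 4 * card ?D"
  proof (intro mult_le_mono2 card_mono)
    show "finite ?D"
      using finite_perms by simp
    show "{\<tau>. \<tau> permutes {0..<L} \<and> \<tau> x < \<tau> x' \<and> \<tau> y' < \<tau> y} \<subseteq> ?D"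
    proof safe
      fix \<tau> assume "\<tau> permutes {0..<L}" "\<tau> x < \<tau> x'" "\<tau> y' < \<tau> y"
        and eq: "ascent_offset L \<tau> x = ascent_offset L \<tau> y"
      then have "ascent_offset L \<tau> y = 1"
        using ascent_offset_eq_1[of L \<tau> x] xy by (simp add: ascent_def x'_def)
      then have "ascent L \<tau> y 1"
        using ascent_ascent_offset[OF \<open>\<tau> permutes _\<close> L, of y] by simp
      then show False
        using \<open>\<tau> y' < \<tau> y\<close> xy by (simp add: ascent_def y'_def)
    qed
  qed
  finally show ?thesis .
qed

lemma card_offsets_differ:
  assumes L: "2 \<le> L" and xy: "x < L" "y < L" "x \<noteq> y"
  shows "card (perms L) \<le> 4 * card {\<tau> \<in> perms L. ascent_offset L \<tau> x \<noteq> ascent_offset L \<tau> y}"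
proof -
  consider "y = (x + 1) mod L" | "x = (y + 1) mod L" | "y \<noteq> (x + 1) mod L" "x \<noteq> (y + 1) mod L"
    by blast
  then show ?thesis
  proof cases
    case 1
    then show ?thesis using card_offsets_differ_adjacent[OF L xy(1)] by simp
  next
    case 2
    then have "{\<tau> \<in> perms L. ascent_offset L \<tau> x \<noteq> ascent_offset L \<tau> y}
        = {\<tau> \<in> perms L. ascent_offset L \<tau> y \<noteq> ascent_offset L \<tau> ((y + 1) mod L)}"
      by auto
    then show ?thesis using card_offsets_differ_adjacent[OF L xy(2)] by simp
  next
    case 3
    then show ?thesis using card_offsets_differ_apart[OF L xy] by simp
  qed
qed

section \<open>Drift of the potential\<close>

definition potential :: "nat \<Rightarrow> int \<Rightarrow> real" where
  "potential L e = of_int (e * (int L - e))"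

lemma potential_nonneg: "0 \<le> e \<Longrightarrow> e \<le> int L \<Longrightarrow> 0 \<le> potential L e"
  by (simp add: potential_def)

lemma potential_le: "potential L e \<le> real L ^ 2 / 4"
proof -
  have "0 \<le> (real L - 2 * of_int e) ^ 2"
    by simp
  then show ?thesis
    by (simp add: potential_def power2_eq_square algebra_simps)
qed

lemma potential_mod: "0 \<le> e \<Longrightarrow> e \<le> int L \<Longrightarrow> potential L (e mod int L) = potential L e"
  by (cases "e = int L") (simp_all add: potential_def)

lemma potential_add:
  "potential L (d + D) = potential L d + of_int (D * (int L - 2 * d)) - of_int (D ^ 2)"
  by (simp add: potential_def power2_eq_square algebra_simps)

text \<open>The new distance is \<open>d + b - a\<close> reduced modulo \<open>L\<close>, and since \<open>0 \<le> d + b - a \<le> L\<close> the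
  reduction does not change the potential.\<close>

lemma potential_cdist_source:
  assumes perm: "\<tau> permutes {0..<L}" and L: "2 \<le> L"
  shows "potential L (cdist L (source L \<tau> x) (source L \<tau> y))
       = potential L (cdist L x y + (int (ascent_offset L \<tau> y) - int (ascent_offset L \<tau> x)))"
proof -
  define a b d where "a = ascent_offset L \<tau> x" and "b = ascent_offset L \<tau> y" and "d = cdist L x y"
  have L1: "1 \<le> L" using L by simp
  have d: "0 \<le> d" "d \<le> int L"
    using cdist_nonneg[OF L1] cdist_less[OF L1, of x y] by (simp_all add: d_def)
  have "a \<le> nat d + b"
    using ascent_offset_shift[OF perm L add_cdist_mod[OF L1]] by (simp add: a_def b_def d_def)
  moreover have "b \<le> (L - nat d) + a"
    using ascent_offset_shift[OF perm L add_complement_cdist_mod[OF L1]] by (simp add: a_def b_def d_def)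
  ultimately have "0 \<le> d + (int b - int a)" "d + (int b - int a) \<le> int L"
    using d by linarith+
  moreover have "cdist L (source L \<tau> x) (source L \<tau> y) = (int y + int b - (int x + int a)) mod int L"
    by (simp add: cdist_def source_def a_def b_def zmod_int mod_simps)
  then have "cdist L (source L \<tau> x) (source L \<tau> y) = (d + (int b - int a)) mod int L"
    unfolding d_def cdist_def mod_add_left_eq by (simp add: algebra_simps)
  ultimately show ?thesis
    by (simp add: potential_mod a_def b_def d_def)
qed

lemma expectation_potential_source:
  assumes L: "2 \<le> L" and xy: "x < L" "y < L" "x \<noteq> y"
  shows "measure_pmf.expectation (source_pmf L) (\<lambda>f. potential L (cdist L (f x) (f y)))
           \<le> potential L (cdist L x y) - 1 / 4"
proof -
  define d where "d = cdist L x y"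
  define D where "D \<tau> = int (ascent_offset L \<tau> y) - int (ascent_offset L \<tau> x)" for \<tau>
  define c where "c = real (card (perms L))"
  have c: "0 < c"
    unfolding c_def using finite_perms perms_nonempty by (simp add: card_gt_0_iff)
  have "of_int (D \<tau>) = real (ascent_offset L \<tau> y) - real (ascent_offset L \<tau> x)" for \<tau>
    by (simp add: D_def)
  then have sum_D: "(\<Sum>\<tau>\<in>perms L. of_int (D \<tau>)) = (0::real)"
    using sum_ascent_offset_eq[of L y x] L xy by (simp only: sum_subtractf)
  have D_sq: "of_bool (ascent_offset L \<tau> x \<noteq> ascent_offset L \<tau> y) \<le> (of_int (D \<tau> ^ 2) :: real)" for \<tau>
  proof (cases "D \<tau> = 0")
    case False
    then have "1 \<le> \<bar>D \<tau>\<bar>"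
      by linarith
    then have "1 \<le> D \<tau> ^ 2"
      using one_le_power[of "\<bar>D \<tau>\<bar>" 2] by simp
    then show ?thesis
      by (metis of_bool_def of_int_1 of_int_0_le_iff of_int_le_iff zero_le_power2)
  qed (simp add: D_def)
  have "(\<Sum>\<tau>\<in>perms L. potential L (cdist L (source L \<tau> x) (source L \<tau> y)))
      = (\<Sum>\<tau>\<in>perms L. potential L d + of_int (D \<tau>) * of_int (int L - 2 * d) - of_int (D \<tau> ^ 2))"
    using L by (intro sum.cong refl) (simp add: potential_cdist_source potential_add D_def d_def)
  also have "\<dots> \<le> (\<Sum>\<tau>\<in>perms L. potential L d + of_int (D \<tau>) * of_int (int L - 2 * d)
        - of_bool (ascent_offset L \<tau> x \<noteq> ascent_offset L \<tau> y))"
    using D_sq by (intro sum_mono) simp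
  also have "\<dots> = c * potential L d - real (card {\<tau> \<in> perms L. ascent_offset L \<tau> x \<noteq> ascent_offset L \<tau> y})"
    using finite_perms
    by (simp add: sum.distrib sum_subtractf sum_distrib_right[symmetric] sum_D c_def of_bool_def
        sum.If_cases Int_def)
  also have "\<dots> \<le> c * (potential L d - 1 / 4)"
    using card_offsets_differ[OF L xy] unfolding c_def by (simp add: algebra_simps)
  finally have "(\<Sum>\<tau>\<in>perms L. potential L (cdist L (source L \<tau> x) (source L \<tau> y)))
      \<le> c * (potential L d - 1 / 4)" .
  then show ?thesis
    using c unfolding source_pmf_def c_def d_def
    by (simp add: integral_pmf_of_set[OF perms_nonempty finite_perms] divide_le_eq mult.commute)
qed

section \<open>Coalescence of two coordinates\<close>

lemma expectation_bind_pmf_finite: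
  fixes h :: "'b \<Rightarrow> real"
  assumes "finite (set_pmf p)" "\<And>x. x \<in> set_pmf p \<Longrightarrow> finite (set_pmf (f x))"
  shows "measure_pmf.expectation (bind_pmf p f) h
       = measure_pmf.expectation p (\<lambda>x. measure_pmf.expectation (f x) h)"
proof -
  have "measure_pmf.expectation (bind_pmf p f) h
      = (\<Sum>x\<in>set_pmf p. pmf p x *\<^sub>R measure_pmf.expectation (f x) h)"
    using assms by (intro pmf_expectation_bind) auto
  also have "\<dots> = measure_pmf.expectation p (\<lambda>x. measure_pmf.expectation (f x) h)"
    using assms by (subst integral_measure_pmf[of "set_pmf p"]) auto
  finally show ?thesis .
qed

lemma expectation_mono_finite:
  assumes "finite (set_pmf p)" "\<And>x. x \<in> set_pmf p \<Longrightarrow> f x \<le> (g x :: real)"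
  shows "measure_pmf.expectation p f \<le> measure_pmf.expectation p g"
  using assms by (intro integral_mono_AE integrable_measure_pmf_finite AE_pmfI) auto

lemma expectation_add_const_finite:
  assumes "finite (set_pmf p)"
  shows "measure_pmf.expectation p (\<lambda>x. f x + c) = measure_pmf.expectation p f + (c :: real)"
  using assms by (simp add: integrable_measure_pmf_finite)

lemma expectation_source_iter_Suc:
  "measure_pmf.expectation (source_iter L (Suc n)) (F :: _ \<Rightarrow> real)
     = measure_pmf.expectation (source_pmf L)
         (\<lambda>f. measure_pmf.expectation (source_iter L n) (\<lambda>g. F (g \<circ> f)))"
  by (simp add: expectation_bind_pmf_finite finite_set_pmf_source_pmf finite_set_pmf_source_iter)

lemma expectation_source_iter_add:
  "measure_pmf.expectation (source_iter L (m + n)) (F :: _ \<Rightarrow> real)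
     = measure_pmf.expectation (source_iter L m)
         (\<lambda>g. measure_pmf.expectation (source_iter L n) (\<lambda>h. F (h \<circ> g)))"
  unfolding source_iter_add by (simp add: expectation_bind_pmf_finite finite_set_pmf_source_iter)

definition separation :: "nat \<Rightarrow> nat \<Rightarrow> nat \<Rightarrow> nat \<Rightarrow> real" where
  "separation L n x y = measure_pmf.prob (source_iter L n) {g. g x \<noteq> g y}"

lemma separation_eq_expectation:
  "separation L n x y = measure_pmf.expectation (source_iter L n) (\<lambda>g. of_bool (g x \<noteq> g y))"
proof -
  have eq: "(\<lambda>g. of_bool (g x \<noteq> g y) :: real) = indicator {g. g x \<noteq> g y}"
    by (auto simp: indicator_def)
  show ?thesis
    unfolding separation_def eq by simp
qed

lemma separation_self [simp]: "separation L n x x = 0"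
  by (simp add: separation_def)

lemma separation_le_1: "separation L n x y \<le> 1"
  by (simp add: separation_def)

lemma potential_supermartingale:
  assumes L: "2 \<le> L"
  shows "x < L \<Longrightarrow> y < L \<Longrightarrow>
    measure_pmf.expectation (source_iter L n)
      (\<lambda>g. real n / 4 * of_bool (g x \<noteq> g y) + potential L (cdist L (g x) (g y)))
    \<le> potential L (cdist L x y)"
proof (induction n arbitrary: x y)
  case 0
  then show ?case by simp
next
  case (Suc n)
  show ?case
  proof (cases "x = y")
    case True
    then show ?thesis by (simp add: potential_def)
  next
    case False
    have step: "measure_pmf.expectation (source_iter L n)
          (\<lambda>g. real (Suc n) / 4 * of_bool (g (f x) \<noteq> g (f y)) + potential L (cdist L (g (f x)) (g (f y))))
        \<le> potential L (cdist L (f x) (f y)) + 1 / 4"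
      if "f \<in> set_pmf (source_pmf L)" for f
    proof -
      have f: "f x < L" "f y < L"
        using that L by (auto simp: set_pmf_source_pmf source_less)
      have "measure_pmf.expectation (source_iter L n)
          (\<lambda>g. real (Suc n) / 4 * of_bool (g (f x) \<noteq> g (f y)) + potential L (cdist L (g (f x)) (g (f y))))
        \<le> measure_pmf.expectation (source_iter L n)
          (\<lambda>g. (real n / 4 * of_bool (g (f x) \<noteq> g (f y)) + potential L (cdist L (g (f x)) (g (f y)))) + 1 / 4)"
        by (intro expectation_mono_finite finite_set_pmf_source_iter) (simp add: algebra_simps)
      also have "\<dots> \<le> potential L (cdist L (f x) (f y)) + 1 / 4"
        using Suc.IH[OF f] by (simp add: expectation_add_const_finite finite_set_pmf_source_iter)
      finally show ?thesis .
    qed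
    have "measure_pmf.expectation (source_iter L (Suc n))
        (\<lambda>g. real (Suc n) / 4 * of_bool (g x \<noteq> g y) + potential L (cdist L (g x) (g y)))
      \<le> measure_pmf.expectation (source_pmf L) (\<lambda>f. potential L (cdist L (f x) (f y)) + 1 / 4)"
      unfolding expectation_source_iter_Suc
      by (intro expectation_mono_finite finite_set_pmf_source_pmf) (use step in simp)
    also have "\<dots> \<le> potential L (cdist L x y)"
      using expectation_potential_source[OF L Suc.prems False]
      by (simp add: expectation_add_const_finite finite_set_pmf_source_pmf)
    finally show ?thesis .
  qed
qed

lemma separation_le:
  assumes L: "2 \<le> L" and "x < L" "y < L"
  shows "real n * separation L n x y \<le> real L ^ 2"
proof -
  have "real n / 4 * separation L n x y
      = measure_pmf.expectation (source_iter L n) (\<lambda>g. real n / 4 * of_bool (g x \<noteq> g y))"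
    by (simp add: separation_eq_expectation)
  also have "\<dots> \<le> measure_pmf.expectation (source_iter L n)
      (\<lambda>g. real n / 4 * of_bool (g x \<noteq> g y) + potential L (cdist L (g x) (g y)))"
    using L cdist_nonneg cdist_less
    by (intro expectation_mono_finite finite_set_pmf_source_iter)
       (simp add: potential_nonneg less_imp_le)
  also have "\<dots> \<le> potential L (cdist L x y)"
    using potential_supermartingale[OF assms] .
  also have "\<dots> \<le> real L ^ 2 / 4"
    by (rule potential_le)
  finally show ?thesis
    by simp
qed

lemma separation_add_le:
  assumes L: "2 \<le> L" and "x < L" "y < L"
    and bound: "\<And>u v. u < L \<Longrightarrow> v < L \<Longrightarrow> separation L m u v \<le> c"
  shows "separation L (n + m) x y \<le> c * separation L n x y"
proof -
  have "separation L (n + m) x y = measure_pmf.expectation (source_iter L n) (\<lambda>g. separation L m (g x) (g y))"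
    by (simp add: separation_eq_expectation expectation_source_iter_add)
  also have "\<dots> \<le> measure_pmf.expectation (source_iter L n) (\<lambda>g. c * of_bool (g x \<noteq> g y))"
    using assms source_iter_less[of L]
    by (intro expectation_mono_finite finite_set_pmf_source_iter) auto
  also have "\<dots> = c * separation L n x y"
    by (simp add: separation_eq_expectation)
  finally show ?thesis .
qed

lemma separation_mono:
  assumes L: "2 \<le> L" and "x < L" "y < L" and "n \<le> m"
  shows "separation L m x y \<le> separation L n x y"
  using separation_add_le[OF assms(1-3), of "m - n" 1 n] assms(4) separation_le_1 by simp

lemma separation_le_half_power:
  assumes L: "2 \<le> L" and n: "a * (2 * L ^ 2) \<le> n" and "x < L" "y < L"
  shows "separation L n x y \<le> (1 / 2) ^ a"
proof -
  define K where "K = 2 * L ^ 2"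
  have half: "separation L K u v \<le> 1 / 2" if "u < L" "v < L" for u v
  proof -
    have "real L ^ 2 * (2 * separation L K u v) \<le> real L ^ 2 * 1"
      using separation_le[OF L that, of K] by (simp add: K_def)
    then have "2 * separation L K u v \<le> 1"
      by (rule mult_left_le_imp_le) (use L in simp)
    then show ?thesis
      by simp
  qed
  have "separation L (b * K) u v \<le> (1 / 2) ^ b" if "u < L" "v < L" for b u v
    using that
  proof (induction b arbitrary: u v)
    case 0
    then show ?case by (simp add: separation_le_1)
  next
    case (Suc b)
    have "separation L (K + b * K) u v \<le> (1 / 2) ^ b * separation L K u v"
      using Suc.IH by (rule separation_add_le[OF L Suc.prems])
    also have "\<dots> \<le> (1 / 2) ^ b * (1 / 2)"
      using half[OF Suc.prems] by (rule mult_left_mono) simp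
    finally show ?case
      by (simp add: add.commute mult.commute)
  qed
  then show ?thesis
    using separation_mono[OF L assms(3,4) n] unfolding K_def by (meson order.trans assms(3,4))
qed

section \<open>Absorption\<close>

lemma absorbed_pullback:
  assumes "\<And>t. Suc t < L \<Longrightarrow> g t = g (Suc t)"
  shows "absorbed (pullback L g \<Gamma>)"
proof -
  have const: "g t = g 0" if "t < L" for t
    using that
  proof (induction t)
    case (Suc t)
    then show ?case
      using assms[of t] by simp
  qed simp
  have "c = \<Gamma> ! g 0" if c: "c \<in> set (pullback L g \<Gamma>)" for c
  proof -
    obtain t where "t < L" "c = \<Gamma> ! g t"
      using c by (auto simp: pullback_def)
    then show ?thesis
      using const[of t] by simp
  qed
  then show ?thesis
    unfolding absorbed_def by (cases "\<Gamma> ! g 0") blast+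
qed

lemma prob_not_absorbed_pullback_le:
  "measure_pmf.prob p {g. \<not> absorbed (pullback L g \<Gamma>)}
     \<le> (\<Sum>t<L - 1. measure_pmf.prob p {g. g t \<noteq> g (Suc t)})"
proof -
  have "{g. \<not> absorbed (pullback L g \<Gamma>)} \<subseteq> (\<Union>t<L - 1. {g. g t \<noteq> g (Suc t)})"
  proof
    fix g assume "g \<in> {g. \<not> absorbed (pullback L g \<Gamma>)}"
    then have "\<not> (\<forall>t. Suc t < L \<longrightarrow> g t = g (Suc t))"
      using absorbed_pullback by blast
    then show "g \<in> (\<Union>t<L - 1. {g. g t \<noteq> g (Suc t)})"
      by auto
  qed
  then have "measure_pmf.prob p {g. \<not> absorbed (pullback L g \<Gamma>)}
      \<le> measure_pmf.prob p (\<Union>t<L - 1. {g. g t \<noteq> g (Suc t)})"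
    by (rule measure_pmf.finite_measure_mono) simp
  also have "\<dots> \<le> (\<Sum>t<L - 1. measure_pmf.prob p {g. g t \<noteq> g (Suc t)})"
    by (rule measure_pmf.finite_measure_subadditive_finite) auto
  finally show ?thesis .
qed

lemma prob_never_absorbed_eq_0:
  assumes "absorbed \<Gamma>" "0 < n"
  shows "measure_pmf.prob (traj L n \<Gamma>) {xs. \<forall>i < n. \<not> absorbed (xs ! i)} = 0"
proof -
  have "xs ! 0 = \<Gamma>" if "xs \<in> set_pmf (traj L n \<Gamma>)" for xs
    using that by (cases n) auto
  then show ?thesis
    using assms by (auto simp: measure_pmf_zero_iff)
qed

lemma prob_never_absorbed_le:
  assumes L: "2 \<le> L" and len: "length \<Gamma> = L" and "0 < N"
  shows "measure_pmf.prob (traj L N \<Gamma>) {xs. \<forall>i < N. \<not> absorbed (xs ! i)}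
           \<le> (\<Sum>t<L - 1. separation L (N - 1) t (Suc t))"
proof -
  have "measure_pmf.prob (traj L N \<Gamma>) {xs. \<forall>i < N. \<not> absorbed (xs ! i)}
      \<le> measure_pmf.prob (traj L N \<Gamma>) {xs. \<not> absorbed (xs ! (N - 1))}"
    using \<open>0 < N\<close> by (intro measure_pmf.finite_measure_mono) auto
  also have "\<dots> = measure_pmf.prob (map_pmf (\<lambda>xs. xs ! (N - 1)) (traj L N \<Gamma>)) {\<Gamma>. \<not> absorbed \<Gamma>}"
    by (simp add: vimage_def)
  also have "\<dots> = measure_pmf.prob (source_iter L (N - 1)) {g. \<not> absorbed (pullback L g \<Gamma>)}"
    using len by (simp add: map_pmf_nth_traj[OF L] vimage_def)
  also have "\<dots> \<le> (\<Sum>t<L - 1. separation L (N - 1) t (Suc t))"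
    unfolding separation_def by (rule prob_not_absorbed_pullback_le)
  finally show ?thesis .
qed

theorem claim5:
  fixes L a :: nat and \<Gamma>0 :: "bool list"
  assumes "L \<ge> 1" and "length \<Gamma>0 = L" and "a \<ge> 1"
  shows "measure_pmf.prob (traj L (4 * a * L ^ 2) \<Gamma>0)
           {xs. \<forall>i < 4 * a * L ^ 2. \<not> absorbed (xs ! i)}
         \<le> real L * (1 / 2) ^ a"
proof (cases "L = 1")
  case True
  then have "absorbed \<Gamma>0"
    using assms(2) by (auto simp: absorbed_def length_Suc_conv)
  then show ?thesis
    using assms by (simp add: prob_never_absorbed_eq_0)
next
  case False
  with assms(1) have L: "2 \<le> L"
    by simp
  have "a * (2 * L ^ 2) \<le> 4 * a * L ^ 2 - 1"
    using assms L by auto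
  then have "separation L (4 * a * L ^ 2 - 1) t (Suc t) \<le> (1 / 2) ^ a" if "t < L - 1" for t
    using that by (intro separation_le_half_power[OF L]) auto
  then have "(\<Sum>t<L - 1. separation L (4 * a * L ^ 2 - 1) t (Suc t)) \<le> (\<Sum>t<L - 1. (1 / 2) ^ a)"
    by (intro sum_mono) simp
  also have "\<dots> \<le> real L * (1 / 2) ^ a"
    by simp
  finally have "(\<Sum>t<L - 1. separation L (4 * a * L ^ 2 - 1) t (Suc t)) \<le> real L * (1 / 2) ^ a" .
  moreover have "0 < 4 * a * L ^ 2"
    using assms by simp
  ultimately show ?thesis
    using prob_never_absorbed_le[OF L assms(2)] by (meson order.trans)
qed

end
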